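(* Let $V\subseteq\mathcal V$ be finite and $\mathbb E,\mathbb F\in\mathit{NProg}(V)$. (1) $\mathbb E\le_T^e\mathbb F$ implies $\mathbb E\le_T^p\mathbb F$, but the converse fails in general. (2) $\mathbb E\le_P^e\mathbb F$ implies $\mathbb E\le_P^p\mathbb F$, but the converse fails in general.
   Context: $\mathcal V$ is a countably infinite set of qubit variables; $\mathcal H_V=\bigotimes_{q\in V}\mathcal H_q$. $\mathcal D(\mathcal H)$: partial density operators; $\mathcal P(\mathcal H)$: effects; $\mathcal S(\mathcal H)$: projectors. $\mathit{DProg}(V)$: completely positive trace-nonincreasing super-operators on $\mathcal L(\mathcal H_V)$; $\mathit{NProg}(V)$: nonempty convex closed subsets of $\mathit{DProg}(V)$. Operators/super-operators on subsystems are implicitly extended by tensoring with identities. For finite $W$ and $M,N\in\mathcal P(\mathcal H_W)$: $\mathbb E\models_{tot}(\{M\},\{N\})$ iff for all finite $X\supseteq V\cup W$ and $\rho\in\mathcal D(\mathcal H_X)$, ${\rm tr}(M\rho)\le\inf_{\mathcal E\in\mathbb E}{\rm tr}(N\mathcal E(\rho))$; $\mathbb E\models_{par}(\{M\},\{N\})$ iff for all such $X,\rho$, ${\rm tr}(M\rho)\le\inf_{\mathcal E\in\mathbb E}[{\rm tr}(N\mathcal E(\rho))+{\rm tr}(\rho)-{\rm tr}(\mathcal E(\rho))]$. $\mathbb E\le_T^e\mathbb F$ iff for every finite $W$ and all $M,N\in\mathcal P(\mathcal H_W)$, $\mathbb E\models_{tot}(\{M\},\{N\})\Rightarrow\mathbb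 F\models_{tot}(\{M\},\{N\})$; $\le_T^p$ is the same with $M,N$ restricted to projectors $\mathcal S(\mathcal H_W)$; $\le_P^e,\le_P^p$ likewise with $\models_{par}$. *)

theory Defs
  imports Complex_Main
begin

text \<open>A computational basis state of the
  register X (a finite set of variables) is an assignment nat => bool that is
  False outside X. An operator on H_X is a complex function of two basis states,
  required to vanish outside basis X x basis X.\<close>

type_synonym qvar = nat
type_synonym bstate = "qvar \<Rightarrow> bool"
type_synonym qop = "bstate \<Rightarrow> bstate \<Rightarrow> complex"
type_synonym sop = "qop \<Rightarrow> qop"

definition basis :: "qvar set \<Rightarrow> bstate set" where
  "basis X = {f. \<forall>i. i \<notin> X \<longrightarrow> \<not> f i}"

definition res :: "qvar set \<Rightarrow> bstate \<Rightarrow> bstate" where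
  "res X f = (\<lambda>i. if i \<in> X then f i else False)"

definition merge :: "qvar set \<Rightarrow> bstate \<Rightarrow> bstate \<Rightarrow> bstate" where
  "merge V u a = (\<lambda>i. if i \<in> V then u i else a i)"

definition op_on :: "qvar set \<Rightarrow> qop \<Rightarrow> bool" where
  "op_on X A \<longleftrightarrow> (\<forall>f g. A f g \<noteq> 0 \<longrightarrow> f \<in> basis X \<and> g \<in> basis X)"

definition restrict_op :: "qvar set \<Rightarrow> qop \<Rightarrow> qop" where
  "restrict_op X A = (\<lambda>f g. if f \<in> basis X \<and> g \<in> basis X then A f g else 0)"

definition idop :: "qvar set \<Rightarrow> qop" where
  "idop X = (\<lambda>f g. if f \<in> basis X \<and> f = g then 1 else 0)"

definition mult :: "qvar set \<Rightarrow> qop \<Rightarrow> qop \<Rightarrow> qop" where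
  "mult X A B = (\<lambda>f g. \<Sum>h\<in>basis X. A f h * B h g)"

definition adj :: "qop \<Rightarrow> qop" where
  "adj A = (\<lambda>f g. cnj (A g f))"

definition trace :: "qvar set \<Rightarrow> qop \<Rightarrow> complex" where
  "trace X A = (\<Sum>f\<in>basis X. A f f)"

definition pos :: "qvar set \<Rightarrow> qop \<Rightarrow> bool" where
  "pos X A \<longleftrightarrow> op_on X A \<and>
     (\<forall>v :: bstate \<Rightarrow> complex.
        let q = (\<Sum>f\<in>basis X. \<Sum>g\<in>basis X. cnj (v f) * A f g * v g)
        in Im q = 0 \<and> Re q \<ge> 0)"

definition density :: "qvar set \<Rightarrow> qop \<Rightarrow> bool" where
  "density X \<rho> \<longleftrightarrow> pos X \<rho> \<and> Re (trace X \<rho>) \<le> 1"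

definition effect :: "qvar set \<Rightarrow> qop \<Rightarrow> bool" where
  "effect X M \<longleftrightarrow> pos X M \<and> pos X (\<lambda>f g. idop X f g - M f g)"

definition projector :: "qvar set \<Rightarrow> qop \<Rightarrow> bool" where
  "projector X M \<longleftrightarrow> op_on X M \<and> adj M = M \<and> mult X M M = M"

text \<open>Extension M (x) I of an operator M on H_W to H_X (W \<subseteq> X).\<close>
definition extop :: "qvar set \<Rightarrow> qvar set \<Rightarrow> qop \<Rightarrow> qop" where
  "extop X W M = (\<lambda>f g. if f \<in> basis X \<and> g \<in> basis X \<and> (\<forall>i. i \<notin> W \<longrightarrow> f i = g i)
                        then M (res W f) (res W g) else 0)"

text \<open>Extension E (x) id of a super-operator E on L(H_V) to L(H_X) (V \<subseteq> X).\<close>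
definition block :: "qvar set \<Rightarrow> qop \<Rightarrow> bstate \<Rightarrow> bstate \<Rightarrow> qop" where
  "block V \<rho> a b = (\<lambda>u v. if u \<in> basis V \<and> v \<in> basis V
                          then \<rho> (merge V u a) (merge V v b) else 0)"

definition extsup :: "qvar set \<Rightarrow> qvar set \<Rightarrow> sop \<Rightarrow> qop \<Rightarrow> qop" where
  "extsup X V E \<rho> = (\<lambda>f g. if f \<in> basis X \<and> g \<in> basis X
       then E (block V \<rho> (res (- V) f) (res (- V) g)) (res V f) (res V g) else 0)"

text \<open>DProg(V): completely positive, trace-nonincreasing (linear) super-operators on
  L(H_V). Each super-operator is represented canonically: it only depends on the
  restriction of its argument to H_V and its values are operators on H_V.\<close>
definition DProg :: "qvar set \<Rightarrow> sop set" where
  "DProg V = {E.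
     (\<forall>A. E A = E (restrict_op V A)) \<and>
     (\<forall>A. op_on V (E A)) \<and>
     (\<forall>A B. E (\<lambda>f g. A f g + B f g) = (\<lambda>f g. E A f g + E B f g)) \<and>
     (\<forall>c A. E (\<lambda>f g. c * A f g) = (\<lambda>f g. c * E A f g)) \<and>
     (\<forall>X \<rho>. finite X \<longrightarrow> V \<subseteq> X \<longrightarrow> pos X \<rho> \<longrightarrow> pos X (extsup X V E \<rho>)) \<and>
     (\<forall>\<rho>. pos V \<rho> \<longrightarrow> Re (trace V (E \<rho>)) \<le> Re (trace V \<rho>))}"

definition NProg :: "qvar set \<Rightarrow> sop set set" where
  "NProg V = {\<EE>. \<EE> \<noteq> {} \<and> \<EE> \<subseteq> DProg V \<and>
     (\<forall>E1\<in>\<EE>. \<forall>E2\<in>\<EE>. \<forall>p::real. 0 \<le> p \<and> p \<le> 1 \<longrightarrow>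
        (\<lambda>A f g. complex_of_real p * E1 A f g + complex_of_real (1 - p) * E2 A f g) \<in> \<EE>) \<and>
     (\<forall>s E. (\<forall>n::nat. s n \<in> \<EE>) \<longrightarrow> E \<in> DProg V \<longrightarrow>
        (\<forall>A f g. (\<lambda>n. s n A f g) \<longlonglongrightarrow> E A f g) \<longrightarrow> E \<in> \<EE>)}"

definition sat_tot :: "qvar set \<Rightarrow> sop set \<Rightarrow> qvar set \<Rightarrow> qop \<Rightarrow> qop \<Rightarrow> bool" where
  "sat_tot V \<EE> W M N \<longleftrightarrow>
     (\<forall>X \<rho>. finite X \<longrightarrow> V \<union> W \<subseteq> X \<longrightarrow> density X \<rho> \<longrightarrow>
        Re (trace X (mult X (extop X W M) \<rho>)) \<le>
        (INF E\<in>\<EE>. Re (trace X (mult X (extop X W N) (extsup X V E \<rho>)))))"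

definition sat_par :: "qvar set \<Rightarrow> sop set \<Rightarrow> qvar set \<Rightarrow> qop \<Rightarrow> qop \<Rightarrow> bool" where
  "sat_par V \<EE> W M N \<longleftrightarrow>
     (\<forall>X \<rho>. finite X \<longrightarrow> V \<union> W \<subseteq> X \<longrightarrow> density X \<rho> \<longrightarrow>
        Re (trace X (mult X (extop X W M) \<rho>)) \<le>
        (INF E\<in>\<EE>. Re (trace X (mult X (extop X W N) (extsup X V E \<rho>)))
                   + Re (trace X \<rho>) - Re (trace X (extsup X V E \<rho>))))"

definition le_T_e :: "qvar set \<Rightarrow> sop set \<Rightarrow> sop set \<Rightarrow> bool" where
  "le_T_e V \<EE> \<FF> \<longleftrightarrow> (\<forall>W M N. finite W \<longrightarrow> effect W M \<longrightarrow> effect W N \<longrightarrow>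
      sat_tot V \<EE> W M N \<longrightarrow> sat_tot V \<FF> W M N)"

definition le_T_p :: "qvar set \<Rightarrow> sop set \<Rightarrow> sop set \<Rightarrow> bool" where
  "le_T_p V \<EE> \<FF> \<longleftrightarrow> (\<forall>W M N. finite W \<longrightarrow> projector W M \<longrightarrow> projector W N \<longrightarrow>
      sat_tot V \<EE> W M N \<longrightarrow> sat_tot V \<FF> W M N)"

definition le_P_e :: "qvar set \<Rightarrow> sop set \<Rightarrow> sop set \<Rightarrow> bool" where
  "le_P_e V \<EE> \<FF> \<longleftrightarrow> (\<forall>W M N. finite W \<longrightarrow> effect W M \<longrightarrow> effect W N \<longrightarrow>
      sat_par V \<EE> W M N \<longrightarrow> sat_par V \<FF> W M N)"

definition le_P_p :: "qvar set \<Rightarrow> sop set \<Rightarrow> sop set \<Rightarrow> bool" where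
  "le_P_p V \<EE> \<FF> \<longleftrightarrow> (\<forall>W M N. finite W \<longrightarrow> projector W M \<longrightarrow> projector W N \<longrightarrow>
      sat_par V \<EE> W M N \<longrightarrow> sat_par V \<FF> W M N)"

end

(* The forward implications hold because every projector is an effect.  For the converses
   it suffices to work over the empty register, where H_V is one-dimensional and a program
   is a scalar r.  Against projector specifications the scalar 1/2 behaves like an extreme
   program.  If tr(P rho) <= tr(Q (rho/2)) for all densities rho, testing with rho
   proportional to |Pe><Pe| gives |Pe|^2 <= |Pe|^2 / 2, so P = 0 and 1/2 totally refines
   the program 0.  If tr(P rho) <= tr(Q (rho/2)) + tr(rho/2), the same test gives
   (1 - Q) P e = 0, so P <= Q and 1/2 partially refines the program 1.  The effect
   specifications (I/2, I) and (I/2, 0) separate the respective pairs. *)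

theory Submission
  imports Defs
begin

section \<open>Operator algebra and projectors\<close>

lemma finite_basis: assumes "finite X" shows "finite (basis X)"
proof -
  have "basis X \<subseteq> (\<lambda>S i. i \<in> S) ` Pow X"
  proof
    fix f assume "f \<in> basis X"
    then have "f = (\<lambda>i. i \<in> {i. f i})" "{i. f i} \<subseteq> X" by (auto simp: basis_def)
    then show "f \<in> (\<lambda>S i. i \<in> S) ` Pow X" by blast
  qed
  then show ?thesis using assms by (meson finite_Pow_iff finite_imageI finite_subset)
qed

lemma basis_empty: "basis {} = {\<lambda>_. False}"
  by (auto simp: basis_def fun_eq_iff)

lemma op_onD: "op_on X A \<Longrightarrow> f \<notin> basis X \<or> g \<notin> basis X \<Longrightarrow> A f g = 0"
  by (auto simp: op_on_def)

lemma idop_op_on: "op_on X (idop X)"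
  by (auto simp: op_on_def idop_def)

lemma mult_idop_left: assumes "finite X" "op_on X A" shows "mult X (idop X) A = A"
proof (intro ext)
  fix f g
  show "mult X (idop X) A f g = A f g"
  proof (cases "f \<in> basis X")
    case True
    have "mult X (idop X) A f g = (\<Sum>h\<in>basis X. if f = h then A h g else 0)"
      unfolding mult_def by (rule sum.cong) (auto simp: idop_def True)
    then show ?thesis using True finite_basis[OF assms(1)] by simp
  next
    case False
    then show ?thesis using op_onD[OF assms(2)] by (simp add: mult_def idop_def)
  qed
qed

lemma mult_idop_right: assumes "finite X" "op_on X A" shows "mult X A (idop X) = A"
proof (intro ext)
  fix f g
  show "mult X A (idop X) f g = A f g"
  proof (cases "g \<in> basis X")
    case True
    have "mult X A (idop X) f g = (\<Sum>h\<in>basis X. if h = g then A f h else 0)"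
      unfolding mult_def by (rule sum.cong) (auto simp: idop_def True)
    then show ?thesis using True finite_basis[OF assms(1)] by simp
  next
    case False
    then have "mult X A (idop X) f g = 0"
      unfolding mult_def by (intro sum.neutral) (auto simp: idop_def)
    then show ?thesis using False op_onD[OF assms(2)] by simp
  qed
qed

lemma mult_diff_left:
  "mult X (\<lambda>f g. A f g - B f g) C = (\<lambda>f g. mult X A C f g - mult X B C f g)"
  by (simp add: mult_def fun_eq_iff algebra_simps sum_subtractf)

lemma mult_diff_right:
  "mult X C (\<lambda>f g. A f g - B f g) = (\<lambda>f g. mult X C A f g - mult X C B f g)"
  by (simp add: mult_def fun_eq_iff algebra_simps sum_subtractf)

lemma adj_mult: "adj (mult X A B) = mult X (adj B) (adj A)"
  by (simp add: adj_def mult_def fun_eq_iff mult.commute)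

lemma trace_scale: "trace X (\<lambda>f g. c * A f g) = c * trace X A"
  by (simp add: trace_def sum_distrib_left)

lemma trace_mult_scale_right:
  "trace X (mult X A (\<lambda>f g. c * B f g)) = c * trace X (mult X A B)"
  by (simp add: trace_def mult_def sum_distrib_left mult_ac)

lemma trace_mult_scale_left:
  "trace X (mult X (\<lambda>f g. c * A f g) B) = c * trace X (mult X A B)"
  by (simp add: trace_def mult_def sum_distrib_left mult_ac)

lemma trace_mult_lincomb_left:
  "trace X (mult X (\<lambda>f g. a * A f g + b * B f g) C)
     = a * trace X (mult X A C) + b * trace X (mult X B C)"
  by (simp add: trace_def mult_def sum.distrib sum_distrib_left algebra_simps)

lemma trace_mult_diff_left:
  "trace X (mult X (\<lambda>f g. A f g - B f g) C) = trace X (mult X A C) - trace X (mult X B C)"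
  by (simp add: mult_diff_left trace_def sum_subtractf)

lemma density_op_on: "density X \<rho> \<Longrightarrow> op_on X \<rho>"
  by (simp add: density_def pos_def)

lemma adj_idop: "adj (idop X) = idop X"
  by (intro ext) (auto simp: adj_def idop_def)

lemma projector_idop: "finite X \<Longrightarrow> projector X (idop X)"
  by (simp add: projector_def idop_op_on mult_idop_left adj_idop)

lemma projector_compl:
  assumes "finite X" "projector X P"
  shows "projector X (\<lambda>f g. idop X f g - P f g)"
proof -
  have P: "op_on X P" "adj P = P" "mult X P P = P" using assms(2) by (auto simp: projector_def)
  have "op_on X (\<lambda>f g. idop X f g - P f g)"
    using P(1) by (auto simp: op_on_def idop_def split: if_splits)
  moreover have "adj (\<lambda>f g. idop X f g - P f g) = (\<lambda>f g. idop X f g - P f g)"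
    using P(2) adj_idop unfolding adj_def by (simp add: fun_eq_iff)
  moreover have "mult X (\<lambda>f g. idop X f g - P f g) (\<lambda>f g. idop X f g - P f g)
      = (\<lambda>f g. idop X f g - P f g)"
    unfolding mult_diff_left mult_diff_right
    using assms(1) P by (simp add: mult_idop_left mult_idop_right idop_op_on)
  ultimately show ?thesis by (simp add: projector_def)
qed

text \<open>If \<open>Q P = P\<close> then also \<open>P Q = P\<close> by taking adjoints, so \<open>Q - P\<close> is idempotent.\<close>
lemma projector_diff:
  assumes "projector X P" "projector X Q" "mult X Q P = P"
  shows "projector X (\<lambda>f g. Q f g - P f g)"
proof -
  have P: "op_on X P" "adj P = P" "mult X P P = P"
    and Q: "op_on X Q" "adj Q = Q" "mult X Q Q = Q" using assms(1,2) by (auto simp: projector_def)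
  have PQ: "mult X P Q = P" using arg_cong[OF assms(3), of adj] by (simp add: adj_mult P(2) Q(2))
  have "op_on X (\<lambda>f g. Q f g - P f g)"
    unfolding op_on_def using op_onD[OF P(1)] op_onD[OF Q(1)] by (metis diff_self)
  moreover have "adj (\<lambda>f g. Q f g - P f g) = (\<lambda>f g. Q f g - P f g)"
    using P(2) Q(2) by (simp add: adj_def fun_eq_iff)
  moreover have "mult X (\<lambda>f g. Q f g - P f g) (\<lambda>f g. Q f g - P f g) = (\<lambda>f g. Q f g - P f g)"
    unfolding mult_diff_left mult_diff_right by (simp add: assms(3) PQ P(3) Q(3))
  ultimately show ?thesis by (simp add: projector_def)
qed

lemma extop_op_on: "op_on X (extop X W A)"
  by (auto simp: op_on_def extop_def)

lemma adj_extop: "adj (extop X W A) = extop X W (adj A)"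
  by (auto simp: adj_def extop_def fun_eq_iff)

lemma mult_extop:
  assumes "finite X" "W \<subseteq> X"
  shows "mult X (extop X W A) (extop X W B) = extop X W (mult W A B)"
proof (intro ext)
  fix f g
  show "mult X (extop X W A) (extop X W B) f g = extop X W (mult W A B) f g"
  proof (cases "f \<in> basis X \<and> g \<in> basis X \<and> (\<forall>i. i \<notin> W \<longrightarrow> f i = g i)")
    case True
    let ?T = "{h \<in> basis X. \<forall>i. i \<notin> W \<longrightarrow> f i = h i}"
    have "mult X (extop X W A) (extop X W B) f g =
       (\<Sum>h\<in>basis X. if \<forall>i. i \<notin> W \<longrightarrow> f i = h i then extop X W A f h * extop X W B h g else 0)"
      unfolding mult_def by (rule sum.cong) (auto simp: extop_def)
    also have "\<dots> = (\<Sum>h\<in>?T. extop X W A f h * extop X W B h g)"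
      by (rule sum.inter_filter[symmetric]) (rule finite_basis[OF assms(1)])
    also have "\<dots> = (\<Sum>k\<in>basis W. A (res W f) k * B k (res W g))"
    proof (rule sum.reindex_bij_witness[where j="res W" and i="\<lambda>k. merge W k f"])
      fix k assume "k \<in> basis W"
      then show "res W (merge W k f) = k" "merge W k f \<in> ?T"
        using True assms(2) by (auto simp: res_def merge_def basis_def fun_eq_iff)
    next
      fix h assume h: "h \<in> ?T"
      then show "merge W (res W h) f = h" by (auto simp: res_def merge_def fun_eq_iff)
      show "res W h \<in> basis W" by (auto simp: res_def basis_def)
      show "A (res W f) (res W h) * B (res W h) (res W g) = extop X W A f h * extop X W B h g"
        using h True by (auto simp: extop_def)
    qed
    also have "\<dots> = extop X W (mult W A B) f g"
      using True by (simp add: extop_def mult_def)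
    finally show ?thesis .
  next
    case False
    then show ?thesis
      unfolding mult_def extop_def by (auto intro!: sum.neutral)
  qed
qed

lemma projector_extop:
  "finite X \<Longrightarrow> W \<subseteq> X \<Longrightarrow> projector W P \<Longrightarrow> projector X (extop X W P)"
  by (simp add: projector_def extop_op_on adj_extop mult_extop)

section \<open>Quadratic forms and testing with rank-one densities\<close>

definition qform :: "qvar set \<Rightarrow> qop \<Rightarrow> (bstate \<Rightarrow> complex) \<Rightarrow> complex" where
  "qform X A v = (\<Sum>f\<in>basis X. \<Sum>g\<in>basis X. cnj (v f) * A f g * v g)"

definition apply_op :: "qvar set \<Rightarrow> qop \<Rightarrow> (bstate \<Rightarrow> complex) \<Rightarrow> bstate \<Rightarrow> complex" where
  "apply_op X A v = (\<lambda>f. \<Sum>g\<in>basis X. A f g * v g)"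

definition sqnorm :: "qvar set \<Rightarrow> (bstate \<Rightarrow> complex) \<Rightarrow> real" where
  "sqnorm X v = (\<Sum>g\<in>basis X. (cmod (v g))\<^sup>2)"

lemma pos_iff_qform:
  "pos X A \<longleftrightarrow> op_on X A \<and> (\<forall>v. Im (qform X A v) = 0 \<and> 0 \<le> Re (qform X A v))"
  by (simp add: pos_def qform_def Let_def)

lemma sqnorm_nonneg: "0 \<le> sqnorm X v"
  by (simp add: sqnorm_def sum_nonneg)

lemma sqnorm_eq_0_iff: "finite X \<Longrightarrow> sqnorm X v = 0 \<longleftrightarrow> (\<forall>g\<in>basis X. v g = 0)"
  by (simp add: sqnorm_def sum_nonneg_eq_0_iff finite_basis)

lemma qform_diff: "qform X (\<lambda>f g. A f g - B f g) v = qform X A v - qform X B v"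
  by (simp add: qform_def algebra_simps sum_subtractf)

lemma qform_scale: "qform X (\<lambda>f g. c * A f g) v = c * qform X A v"
  by (simp add: qform_def sum_distrib_left mult_ac)

lemma qform_lincomb:
  "qform X (\<lambda>f g. a * A f g + b * B f g) v = a * qform X A v + b * qform X B v"
  by (simp add: qform_def sum.distrib sum_distrib_left algebra_simps)

lemma cnj_mult_self: "cnj z * z = of_real ((cmod z)\<^sup>2)"
  by (subst complex_norm_square) (simp add: mult.commute)

lemma qform_idop: "finite X \<Longrightarrow> qform X (idop X) v = of_real (sqnorm X v)"
proof -
  assume X: "finite X"
  have "qform X (idop X) v = (\<Sum>f\<in>basis X. \<Sum>g\<in>basis X. if f = g then cnj (v f) * v g else 0)"
    unfolding qform_def by (intro sum.cong refl) (auto simp: idop_def)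
  also have "\<dots> = (\<Sum>f\<in>basis X. cnj (v f) * v f)"
    using finite_basis[OF X] by simp
  finally show ?thesis by (simp add: cnj_mult_self sqnorm_def)
qed

lemma projector_eq_sum:
  assumes "projector X P"
  shows "P f g = (\<Sum>h\<in>basis X. cnj (P h f) * P h g)"
proof -
  have "cnj (P h f) = P f h" for h
    using assms unfolding projector_def adj_def by (metis (no_types))
  moreover have "P f g = mult X P P f g" using assms by (simp add: projector_def)
  ultimately show ?thesis by (simp add: mult_def)
qed

lemma qform_projector:
  assumes "projector X P"
  shows "qform X P v = of_real (sqnorm X (apply_op X P v))"
proof -
  note P = projector_eq_sum[OF assms]
  have "qform X P v = (\<Sum>f\<in>basis X. \<Sum>g\<in>basis X. \<Sum>h\<in>basis X. cnj (v f) * cnj (P h f) * P h g * v g)"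
    unfolding qform_def by (subst P) (simp add: sum_distrib_left sum_distrib_right mult_ac)
  also have "\<dots> = (\<Sum>h\<in>basis X. \<Sum>f\<in>basis X. \<Sum>g\<in>basis X. cnj (v f) * cnj (P h f) * P h g * v g)"
    by (subst sum.swap) (rule sum.cong[OF refl], rule sum.swap)
  also have "\<dots> = (\<Sum>h\<in>basis X. cnj (apply_op X P v h) * apply_op X P v h)"
    by (simp add: apply_op_def sum_product sum_distrib_left mult_ac)
  finally show ?thesis by (simp add: cnj_mult_self sqnorm_def)
qed

lemma pos_projector: "projector X P \<Longrightarrow> pos X P"
  by (simp add: pos_iff_qform qform_projector sqnorm_nonneg) (simp add: projector_def)

lemma effect_projector: "finite X \<Longrightarrow> projector X P \<Longrightarrow> effect X P"
  by (simp add: effect_def pos_projector projector_compl)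

lemma Re_qform_projector:
  assumes "finite X" "projector X Q"
  shows "Re (qform X Q v) = sqnorm X v - sqnorm X (apply_op X (\<lambda>f g. idop X f g - Q f g) v)"
proof -
  have "qform X Q v = qform X (idop X) v - qform X (\<lambda>f g. idop X f g - Q f g) v"
    using qform_diff[of X "idop X" "\<lambda>f g. idop X f g - Q f g" v] by simp
  then show ?thesis
    by (simp add: qform_idop[OF assms(1)] qform_projector[OF projector_compl[OF assms]])
qed

lemma apply_op_column: "apply_op X A (\<lambda>g. B g f) = (\<lambda>h. mult X A B h f)"
  by (simp add: apply_op_def mult_def)

lemma trace_mult_projector_nonneg:
  assumes "projector X R" "pos X \<rho>"
  shows "0 \<le> Re (trace X (mult X R \<rho>))"
proof -
  note R = projector_eq_sum[OF assms(1)]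
  have "trace X (mult X R \<rho>)
      = (\<Sum>f\<in>basis X. \<Sum>h\<in>basis X. \<Sum>k\<in>basis X. cnj (R k f) * R k h * \<rho> h f)"
    unfolding trace_def mult_def by (subst R) (simp add: sum_distrib_right)
  also have "\<dots> = (\<Sum>k\<in>basis X. \<Sum>h\<in>basis X. \<Sum>f\<in>basis X. cnj (R k f) * R k h * \<rho> h f)"
    by (subst sum.swap) (subst sum.swap, rule sum.cong[OF refl], rule sum.swap)
  also have "\<dots> = (\<Sum>k\<in>basis X. qform X \<rho> (\<lambda>f. cnj (R k f)))"
    by (simp add: qform_def mult_ac)
  finally show ?thesis
    using assms(2) by (simp add: pos_iff_qform Re_sum sum_nonneg)
qed

lemma pos_trace_nonneg: "finite X \<Longrightarrow> pos X \<rho> \<Longrightarrow> 0 \<le> Re (trace X \<rho>)"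
  using trace_mult_projector_nonneg[OF projector_idop]
  by (simp add: mult_idop_left pos_iff_qform)

lemma trace_mult_rank_one:
  "trace X (mult X A (\<lambda>g h. c * v g * cnj (v h))) = c * qform X A v"
  by (simp add: trace_def mult_def qform_def sum_distrib_left mult_ac)

lemma density_rank_one:
  assumes "\<forall>g. g \<notin> basis X \<longrightarrow> w g = 0"
  shows "density X (\<lambda>g h. of_real (1 / (1 + sqnorm X w)) * w g * cnj (w h))"
proof -
  define t where "t = 1 / (1 + sqnorm X w)"
  have t: "0 < t" "t * sqnorm X w \<le> 1"
    using sqnorm_nonneg[of X w] by (auto simp: t_def field_simps)
  have "qform X (\<lambda>g h. of_real t * w g * cnj (w h)) u
      = of_real t * ((\<Sum>f\<in>basis X. cnj (u f) * w f) * cnj (\<Sum>f\<in>basis X. cnj (u f) * w f))" for u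
    by (simp add: qform_def sum_product sum_distrib_left mult_ac)
  also have "\<dots> u = of_real (t * (cmod (\<Sum>f\<in>basis X. cnj (u f) * w f))\<^sup>2)" for u
    by (simp only: complex_norm_square[symmetric] of_real_mult)
  finally have "pos X (\<lambda>g h. of_real t * w g * cnj (w h))"
    using assms t(1) unfolding pos_iff_qform op_on_def by (auto simp del: of_real_mult)
  moreover have "trace X (\<lambda>g h. of_real t * w g * cnj (w h)) = of_real (t * sqnorm X w)"
    by (simp add: trace_def sqnorm_def sum_distrib_left mult.assoc flip: complex_norm_square)
  ultimately show ?thesis
    using t(2) by (simp add: density_def t_def)
qed

text \<open>Densities suffice to compare quadratic forms: test with the normalised rank-one
  density of (the restriction to \<open>H\<^sub>X\<close> of) \<open>v\<close>.\<close>
lemma qform_le_of_trace_le: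
  assumes "\<forall>\<rho>. density X \<rho> \<longrightarrow> Re (trace X (mult X A \<rho>)) \<le> Re (trace X (mult X B \<rho>))"
  shows "Re (qform X A v) \<le> Re (qform X B v)"
proof -
  define w where "w g = (if g \<in> basis X then v g else 0)" for g
  define t where "t = 1 / (1 + sqnorm X w)"
  have w: "qform X C w = qform X C v" for C
    by (simp add: qform_def w_def)
  have "density X (\<lambda>g h. of_real t * w g * cnj (w h))"
    unfolding t_def by (rule density_rank_one) (simp add: w_def)
  from assms[rule_format, OF this] have "t * Re (qform X A v) \<le> t * Re (qform X B v)"
    by (simp add: trace_mult_rank_one w)
  moreover have "0 < t"
    using sqnorm_nonneg[of X w] by (simp add: t_def)
  ultimately show ?thesis by simp
qed

lemma op_on_mult: "op_on X A \<Longrightarrow> op_on X B \<Longrightarrow> op_on X (mult X A B)"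
  unfolding op_on_def mult_def by (metis (mono_tags, lifting) mult_eq_0_iff sum.neutral)

lemma trace_mult_projector_mono:
  assumes "projector X P" "projector X Q" "mult X Q P = P" "pos X \<rho>"
  shows "Re (trace X (mult X P \<rho>)) \<le> Re (trace X (mult X Q \<rho>))"
  using trace_mult_projector_nonneg[OF projector_diff[OF assms(1-3)] assms(4)]
  by (simp add: trace_mult_diff_left)

text \<open>Testing with the columns \<open>v = P e\<^sub>f\<close>, on which \<open>\<langle>v, P v\<rangle> = \<parallel>v\<parallel>\<^sup>2 \<ge> \<langle>v, Q v\<rangle>\<close>.\<close>
lemma projector_eq_0_of_trace_le:
  assumes X: "finite X" and P: "projector X P" and Q: "projector X Q"
    and b: "0 \<le> b" "b < 1"
    and le: "\<forall>\<rho>. density X \<rho> \<longrightarrow> Re (trace X (mult X P \<rho>)) \<le> b * Re (trace X (mult X Q \<rho>))"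
  shows "P = (\<lambda>_ _. 0)"
proof (intro ext)
  fix g f
  define v where "v = (\<lambda>h. P h f)"
  have PP: "mult X P P = P" using P by (simp add: projector_def)
  have "\<forall>\<rho>. density X \<rho> \<longrightarrow>
      Re (trace X (mult X P \<rho>)) \<le> Re (trace X (mult X (\<lambda>f g. of_real b * Q f g) \<rho>))"
    using le by (simp add: trace_mult_scale_left)
  then have "Re (qform X P v) \<le> Re (qform X (\<lambda>f g. of_real b * Q f g) v)"
    by (rule qform_le_of_trace_le)
  then have "sqnorm X v \<le> b * Re (qform X Q v)"
    by (simp add: qform_scale qform_projector[OF P] v_def apply_op_column PP)
  also have "\<dots> \<le> b * sqnorm X v"
    using Re_qform_projector[OF X Q, of v] sqnorm_nonneg b(1) by (simp add: mult_left_mono)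
  finally have "(1 - b) * sqnorm X v \<le> 0"
    by (simp add: algebra_simps)
  then have "sqnorm X v = 0"
    using b(2) sqnorm_nonneg[of X v] by (simp add: mult_le_0_iff)
  then show "P g f = 0"
    using sqnorm_eq_0_iff[OF X] op_onD[of X P] P by (auto simp: v_def projector_def)
qed

text \<open>With \<open>v = P e\<^sub>f\<close> the hypothesis gives \<open>\<parallel>v\<parallel>\<^sup>2 \<le> \<langle>v, Q v\<rangle>\<close>, i.e. \<open>(1 - Q) v = 0\<close>.\<close>
lemma projector_absorb_of_trace_le:
  assumes X: "finite X" and P: "projector X P" and Q: "projector X Q" and b: "0 < b"
    and le: "\<forall>\<rho>. density X \<rho> \<longrightarrow> Re (trace X (mult X P \<rho>))
               \<le> b * Re (trace X (mult X Q \<rho>)) + (1 - b) * Re (trace X \<rho>)"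
  shows "mult X Q P = P"
proof (intro ext)
  fix h f
  define v where "v = (\<lambda>g. P g f)"
  let ?R = "\<lambda>f g. idop X f g - Q f g"
  have oP: "op_on X P" and PP: "mult X P P = P" using P by (simp_all add: projector_def)
  have "\<forall>\<rho>. density X \<rho> \<longrightarrow> Re (trace X (mult X P \<rho>))
      \<le> Re (trace X (mult X (\<lambda>f g. of_real b * Q f g + of_real (1 - b) * idop X f g) \<rho>))"
    using le by (simp add: trace_mult_lincomb_left mult_idop_left[OF X] density_op_on)
  then have "Re (qform X P v)
      \<le> Re (qform X (\<lambda>f g. of_real b * Q f g + of_real (1 - b) * idop X f g) v)"
    by (rule qform_le_of_trace_le)
  then have "sqnorm X v \<le> b * Re (qform X Q v) + (1 - b) * sqnorm X v"
    by (simp add: qform_lincomb qform_idop[OF X] qform_projector[OF P] v_def apply_op_column PP)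
  then have "sqnorm X v \<le> Re (qform X Q v)"
    using b by (simp add: algebra_simps)
  then have "sqnorm X (apply_op X ?R v) = 0"
    using Re_qform_projector[OF X Q, of v] sqnorm_nonneg[of X "apply_op X ?R v"] by linarith
  then have "h \<in> basis X \<Longrightarrow> mult X ?R P h f = 0"
    using sqnorm_eq_0_iff[OF X] by (simp add: v_def apply_op_column)
  moreover have "h \<notin> basis X \<Longrightarrow> mult X ?R P h f = 0"
    using op_onD[OF op_on_mult[OF _ oP]] projector_compl[OF X Q] by (simp add: projector_def)
  ultimately show "mult X Q P h f = P h f"
    by (cases "h \<in> basis X") (simp_all add: mult_diff_left mult_idop_left[OF X oP])
qed

section \<open>Scalar effects and scalar programs\<close>

lemma pos_scale: "pos X A \<Longrightarrow> 0 \<le> r \<Longrightarrow> pos X (\<lambda>f g. of_real r * A f g)"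
  by (auto simp: pos_iff_qform qform_scale op_on_def)

lemma effect_scalar_idop:
  assumes "finite X" "0 \<le> r" "r \<le> 1"
  shows "effect X (\<lambda>f g. of_real r * idop X f g)"
proof -
  note pos_idop = pos_projector[OF projector_idop[OF assms(1)]]
  have "(\<lambda>f g. idop X f g - of_real r * idop X f g) = (\<lambda>f g. of_real (1 - r) * idop X f g)"
    by (simp add: fun_eq_iff algebra_simps)
  moreover have "pos X (\<lambda>f g. of_real (1 - r) * idop X f g)"
    by (rule pos_scale[OF pos_idop]) (use assms in simp)
  moreover have "pos X (\<lambda>f g. of_real r * idop X f g)"
    by (rule pos_scale[OF pos_idop]) (use assms in simp)
  ultimately show ?thesis by (simp only: effect_def)
qed

lemma extop_scalar_idop: "extop X {} (\<lambda>f g. c * idop {} f g) = (\<lambda>f g. c * idop X f g)"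
proof (intro ext)
  fix f g :: bstate
  have "(\<forall>i. i \<notin> {} \<longrightarrow> f i = g i) \<longleftrightarrow> f = g" by (auto simp: fun_eq_iff)
  moreover have "idop {} (res {} f) (res {} g) = 1" by (simp add: idop_def res_def basis_def)
  ultimately show "extop X {} (\<lambda>f g. c * idop {} f g) f g = c * idop X f g"
    by (auto simp: extop_def idop_def)
qed

lemma density_idop_empty: "density {} (idop {})"
  and trace_idop_empty: "trace {} (idop {}) = 1"
  using pos_projector[OF projector_idop[of "{}"]]
  by (simp_all add: density_def trace_def idop_def basis_empty)

lemma scaled_trace_le_iff:
  "(\<forall>X \<rho>. finite X \<longrightarrow> density X \<rho> \<longrightarrow> a * Re (trace X \<rho>) \<le> c * Re (trace X \<rho>)) \<longleftrightarrow> a \<le> c"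
proof
  assume "\<forall>X \<rho>. finite X \<longrightarrow> density X \<rho> \<longrightarrow> a * Re (trace X \<rho>) \<le> c * Re (trace X \<rho>)"
  then show "a \<le> c" using density_idop_empty by (force simp: trace_idop_empty)
qed (auto simp: density_def intro: mult_right_mono pos_trace_nonneg)

definition scalar_prog :: "real \<Rightarrow> sop" where
  "scalar_prog r = (\<lambda>A f g. of_real r * restrict_op {} A f g)"

lemma extsup_scalar_prog:
  assumes "op_on X \<rho>"
  shows "extsup X {} (scalar_prog r) \<rho> = (\<lambda>f g. of_real r * \<rho> f g)"
proof (intro ext)
  fix f g
  have "res {} h \<in> basis {}" "res (- {}) h = h" "merge {} u h = h" for h u
    by (simp_all add: res_def basis_def merge_def)
  then show "extsup X {} (scalar_prog r) \<rho> f g = of_real r * \<rho> f g"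
    using op_onD[OF assms, of f g]
    by (auto simp: extsup_def scalar_prog_def restrict_op_def block_def)
qed

lemma scalar_prog_DProg:
  assumes "0 \<le> r" "r \<le> 1"
  shows "scalar_prog r \<in> DProg {}"
  unfolding DProg_def
proof (intro CollectI conjI allI impI)
  fix A B :: qop and c
  show "scalar_prog r A = scalar_prog r (restrict_op {} A)"
    and "op_on {} (scalar_prog r A)"
    and "scalar_prog r (\<lambda>f g. A f g + B f g) = (\<lambda>f g. scalar_prog r A f g + scalar_prog r B f g)"
    and "scalar_prog r (\<lambda>f g. c * A f g) = (\<lambda>f g. c * scalar_prog r A f g)"
    by (auto simp: scalar_prog_def restrict_op_def op_on_def fun_eq_iff algebra_simps)
next
  fix X \<rho> assume "pos X \<rho>"
  moreover have "op_on X \<rho>" using \<open>pos X \<rho>\<close> by (simp add: pos_iff_qform)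
  ultimately show "pos X (extsup X {} (scalar_prog r) \<rho>)"
    using assms(1) by (simp add: extsup_scalar_prog pos_scale)
next
  fix \<rho> assume "pos {} \<rho>"
  moreover have "trace {} (scalar_prog r \<rho>) = of_real r * trace {} \<rho>"
    by (simp add: trace_def scalar_prog_def restrict_op_def basis_empty)
  ultimately show "Re (trace {} (scalar_prog r \<rho>)) \<le> Re (trace {} \<rho>)"
    using assms pos_trace_nonneg[of "{}" \<rho>] by (simp add: mult_left_le_one_le)
qed

lemma scalar_prog_NProg: "0 \<le> r \<Longrightarrow> r \<le> 1 \<Longrightarrow> {scalar_prog r} \<in> NProg {}"
  unfolding NProg_def
proof (intro CollectI conjI ballI allI impI)
  fix s :: "nat \<Rightarrow> sop" and E
  assume "\<forall>n. s n \<in> {scalar_prog r}" "\<forall>A f g. (\<lambda>n. s n A f g) \<longlonglongrightarrow> E A f g"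
  then have "(\<lambda>n. scalar_prog r A f g) \<longlonglongrightarrow> E A f g" for A f g by simp
  then show "E \<in> {scalar_prog r}"
    using LIMSEQ_unique tendsto_const by (metis singleton_iff ext)
qed (auto simp: scalar_prog_DProg fun_eq_iff algebra_simps)

lemma sat_tot_scalar_prog:
  "sat_tot {} {scalar_prog b} W M N \<longleftrightarrow>
     (\<forall>X \<rho>. finite X \<longrightarrow> W \<subseteq> X \<longrightarrow> density X \<rho> \<longrightarrow>
        Re (trace X (mult X (extop X W M) \<rho>)) \<le> b * Re (trace X (mult X (extop X W N) \<rho>)))"
  unfolding sat_tot_def
  by (simp add: extsup_scalar_prog density_op_on trace_mult_scale_right)

lemma sat_par_scalar_prog:
  "sat_par {} {scalar_prog b} W M N \<longleftrightarrow>
     (\<forall>X \<rho>. finite X \<longrightarrow> W \<subseteq> X \<longrightarrow> density X \<rho> \<longrightarrow>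
        Re (trace X (mult X (extop X W M) \<rho>))
          \<le> b * Re (trace X (mult X (extop X W N) \<rho>)) + (1 - b) * Re (trace X \<rho>))"
  unfolding sat_par_def
  by (simp add: extsup_scalar_prog density_op_on trace_mult_scale_right trace_scale algebra_simps)

lemma trace_mult_scalar_idop:
  "finite X \<Longrightarrow> op_on X \<rho> \<Longrightarrow>
     Re (trace X (mult X (\<lambda>f g. of_real a * idop X f g) \<rho>)) = a * Re (trace X \<rho>)"
  by (simp add: trace_mult_scale_left mult_idop_left)

lemma sat_tot_scalar_prog_scalar_idop:
  "sat_tot {} {scalar_prog b} {} (\<lambda>f g. of_real a * idop {} f g) (\<lambda>f g. of_real c * idop {} f g)
     \<longleftrightarrow> a \<le> b * c"
proof -
  have "sat_tot {} {scalar_prog b} {} (\<lambda>f g. of_real a * idop {} f g) (\<lambda>f g. of_real c * idop {} f g)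
     \<longleftrightarrow> (\<forall>X \<rho>. finite X \<longrightarrow> density X \<rho> \<longrightarrow> a * Re (trace X \<rho>) \<le> (b * c) * Re (trace X \<rho>))"
    unfolding sat_tot_scalar_prog extop_scalar_idop
    by (auto simp: trace_mult_scalar_idop density_op_on mult.assoc)
  then show ?thesis by (simp only: scaled_trace_le_iff)
qed

lemma sat_par_scalar_prog_scalar_idop:
  "sat_par {} {scalar_prog b} {} (\<lambda>f g. of_real a * idop {} f g) (\<lambda>f g. of_real c * idop {} f g)
     \<longleftrightarrow> a \<le> b * c + (1 - b)"
proof -
  have "sat_par {} {scalar_prog b} {} (\<lambda>f g. of_real a * idop {} f g) (\<lambda>f g. of_real c * idop {} f g)
     \<longleftrightarrow> (\<forall>X \<rho>. finite X \<longrightarrow> density X \<rho> \<longrightarrow>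
            a * Re (trace X \<rho>) \<le> (b * c + (1 - b)) * Re (trace X \<rho>))"
    unfolding sat_par_scalar_prog extop_scalar_idop
    by (auto simp: trace_mult_scalar_idop density_op_on mult.assoc distrib_right)
  then show ?thesis by (simp only: scaled_trace_le_iff)
qed

lemma le_T_p_scalar_prog_zero:
  assumes "0 \<le> b" "b < 1"
  shows "le_T_p {} {scalar_prog b} {scalar_prog 0}"
  unfolding le_T_p_def sat_tot_scalar_prog
proof (intro allI impI)
  fix W X :: "qvar set" and P Q \<rho> :: qop
  assume P: "projector W P" and Q: "projector W Q" and X: "finite X" "W \<subseteq> X"
    and le: "\<forall>X \<rho>. finite X \<longrightarrow> W \<subseteq> X \<longrightarrow> density X \<rho> \<longrightarrow>
      Re (trace X (mult X (extop X W P) \<rho>)) \<le> b * Re (trace X (mult X (extop X W Q) \<rho>))"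
  have "extop X W P = (\<lambda>_ _. 0)"
    using projector_eq_0_of_trace_le[OF X(1) projector_extop[OF X P] projector_extop[OF X Q] assms]
      le X by blast
  then show "Re (trace X (mult X (extop X W P) \<rho>)) \<le> 0 * Re (trace X (mult X (extop X W Q) \<rho>))"
    by (simp add: trace_def mult_def)
qed

lemma le_P_p_scalar_prog_one:
  assumes "0 < b"
  shows "le_P_p {} {scalar_prog b} {scalar_prog 1}"
  unfolding le_P_p_def sat_par_scalar_prog
proof (intro allI impI)
  fix W X :: "qvar set" and P Q \<rho> :: qop
  assume P: "projector W P" and Q: "projector W Q" and X: "finite X" "W \<subseteq> X"
    and \<rho>: "density X \<rho>"
    and le: "\<forall>X \<rho>. finite X \<longrightarrow> W \<subseteq> X \<longrightarrow> density X \<rho> \<longrightarrow>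
      Re (trace X (mult X (extop X W P) \<rho>))
        \<le> b * Re (trace X (mult X (extop X W Q) \<rho>)) + (1 - b) * Re (trace X \<rho>)"
  note P' = projector_extop[OF X P] and Q' = projector_extop[OF X Q]
  have "mult X (extop X W Q) (extop X W P) = extop X W P"
    using projector_absorb_of_trace_le[OF X(1) P' Q' assms] le X by blast
  then show "Re (trace X (mult X (extop X W P) \<rho>))
      \<le> 1 * Re (trace X (mult X (extop X W Q) \<rho>)) + (1 - 1) * Re (trace X \<rho>)"
    using trace_mult_projector_mono[OF P' Q'] \<rho> by (simp add: density_def)
qed

lemma not_le_T_e_scalar_prog_zero:
  assumes "0 < b" "b \<le> 1"
  shows "\<not> le_T_e {} {scalar_prog b} {scalar_prog 0}"
proof
  let ?M = "\<lambda>f g. of_real b * idop {} f g" and ?N = "\<lambda>f g. of_real 1 * idop {} f g"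
  assume le: "le_T_e {} {scalar_prog b} {scalar_prog 0}"
  have "effect {} ?M" "effect {} ?N"
    by (rule effect_scalar_idop; use assms in simp)+
  moreover have "sat_tot {} {scalar_prog b} {} ?M ?N"
    by (subst sat_tot_scalar_prog_scalar_idop) simp
  ultimately have "sat_tot {} {scalar_prog 0} {} ?M ?N"
    using le[unfolded le_T_e_def, rule_format, OF finite.emptyI] by blast
  then show False
    using assms(1) by (subst (asm) sat_tot_scalar_prog_scalar_idop) simp
qed

lemma not_le_P_e_scalar_prog_one:
  assumes "0 \<le> b" "b < 1"
  shows "\<not> le_P_e {} {scalar_prog b} {scalar_prog 1}"
proof
  let ?M = "\<lambda>f g. of_real (1 - b) * idop {} f g" and ?N = "\<lambda>f g. of_real 0 * idop {} f g"
  assume le: "le_P_e {} {scalar_prog b} {scalar_prog 1}"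
  have "effect {} ?M" "effect {} ?N"
    by (rule effect_scalar_idop; use assms in simp)+
  moreover have "sat_par {} {scalar_prog b} {} ?M ?N"
    by (subst sat_par_scalar_prog_scalar_idop) simp
  ultimately have "sat_par {} {scalar_prog 1} {} ?M ?N"
    using le[unfolded le_P_e_def, rule_format, OF finite.emptyI] by blast
  then show False
    using assms(2) by (subst (asm) sat_par_scalar_prog_scalar_idop) simp
qed

theorem proposition5p9:
  shows "(\<forall>V \<EE> \<FF>. finite V \<longrightarrow> \<EE> \<in> NProg V \<longrightarrow> \<FF> \<in> NProg V \<longrightarrow>
            le_T_e V \<EE> \<FF> \<longrightarrow> le_T_p V \<EE> \<FF>)
       \<and> (\<exists>V \<EE> \<FF>. finite V \<and> \<EE> \<in> NProg V \<and> \<FF> \<in> NProg V \<and>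
            le_T_p V \<EE> \<FF> \<and> \<not> le_T_e V \<EE> \<FF>)
       \<and> (\<forall>V \<EE> \<FF>. finite V \<longrightarrow> \<EE> \<in> NProg V \<longrightarrow> \<FF> \<in> NProg V \<longrightarrow>
            le_P_e V \<EE> \<FF> \<longrightarrow> le_P_p V \<EE> \<FF>)
       \<and> (\<exists>V \<EE> \<FF>. finite V \<and> \<EE> \<in> NProg V \<and> \<FF> \<in> NProg V \<and>
            le_P_p V \<EE> \<FF> \<and> \<not> le_P_e V \<EE> \<FF>)"
proof -
  have "le_T_e V \<EE> \<FF> \<longrightarrow> le_T_p V \<EE> \<FF>" "le_P_e V \<EE> \<FF> \<longrightarrow> le_P_p V \<EE> \<FF>" for V \<EE> \<FF>
    unfolding le_T_e_def le_T_p_def le_P_e_def le_P_p_def using effect_projector by blast+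
  moreover have "{scalar_prog (1/2)} \<in> NProg {}" "{scalar_prog 0} \<in> NProg {}" "{scalar_prog 1} \<in> NProg {}"
    by (simp_all add: scalar_prog_NProg)
  moreover have "le_T_p {} {scalar_prog (1/2)} {scalar_prog 0}"
    and "\<not> le_T_e {} {scalar_prog (1/2)} {scalar_prog 0}"
    and "le_P_p {} {scalar_prog (1/2)} {scalar_prog 1}"
    and "\<not> le_P_e {} {scalar_prog (1/2)} {scalar_prog 1}"
    by (simp_all add: le_T_p_scalar_prog_zero not_le_T_e_scalar_prog_zero
        le_P_p_scalar_prog_one not_le_P_e_scalar_prog_one)
  ultimately show ?thesis by blast
qed

end
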